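(* A partial cube $G$ is affine if and only if for all vertices $u,v$ of $G$ there exist vertices $w,w'$ of $G$ with $\mathrm{conv}(w,w')=G$ (i.e. $w'=-_Gw$ is the antipode of $w$ in $G$) such that the set of $\Theta$-classes crossing $\mathrm{conv}(u,w)$ and the set of $\Theta$-classes crossing $\mathrm{conv}(v,w')$ are disjoint.
   Context: A partial cube is a graph isomorphic to an isometric subgraph of a hypercube; its edges are partitioned into $\Theta$-classes (Djoković–Winkler relation), each splitting the graph into two convex halfspaces; a $\Theta$-class crosses a subgraph if the subgraph meets both of its halfspaces. A subgraph is convex if it contains every shortest path between its vertices; $\mathrm{conv}(S)$ is the smallest convex subgraph containing $S$. For a subgraph $H$ and $x\in H$, the antipode $-_Hx$ is a vertex of $H$ with $\mathrm{conv}(x,-_Hx)=H$; a partial cube is antipodal if each of its vertices has an antipode in it. A partial cube is affine if it is isomorphic to a halfspace of some antipodal partial cube. *)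

theory Defs
  imports Main
begin

text \<open>A graph is given by a vertex set V and an adjacency relation E (only its
restriction to V matters). Subgraphs such as conv(u,w) are induced subgraphs,
represented by their vertex sets.\<close>

definition walk :: "'a set \<Rightarrow> ('a \<Rightarrow> 'a \<Rightarrow> bool) \<Rightarrow> 'a list \<Rightarrow> bool" where
  "walk V E xs \<longleftrightarrow> xs \<noteq> [] \<and> set xs \<subseteq> V \<and>
     (\<forall>i. Suc i < length xs \<longrightarrow> E (xs ! i) (xs ! Suc i))"

definition walk_betw :: "'a set \<Rightarrow> ('a \<Rightarrow> 'a \<Rightarrow> bool) \<Rightarrow> 'a \<Rightarrow> 'a \<Rightarrow> 'a list \<Rightarrow> bool" where
  "walk_betw V E u v xs \<longleftrightarrow> walk V E xs \<and> hd xs = u \<and> last xs = v"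

definition gdist :: "'a set \<Rightarrow> ('a \<Rightarrow> 'a \<Rightarrow> bool) \<Rightarrow> 'a \<Rightarrow> 'a \<Rightarrow> nat" where
  "gdist V E u v = (LEAST n. \<exists>xs. walk_betw V E u v xs \<and> length xs = Suc n)"

definition is_dist :: "'a set \<Rightarrow> ('a \<Rightarrow> 'a \<Rightarrow> bool) \<Rightarrow> 'a \<Rightarrow> 'a \<Rightarrow> nat \<Rightarrow> bool" where
  "is_dist V E u v n \<longleftrightarrow> (\<exists>xs. walk_betw V E u v xs \<and> length xs = Suc n) \<and>
     (\<forall>xs. walk_betw V E u v xs \<longrightarrow> Suc n \<le> length xs)"

text \<open>Partial cube: a finite nonempty simple graph admitting an isometric embedding
into a hypercube (vertices of hypercubes = finite sets of indices, Hamming distance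
= cardinality of symmetric difference).\<close>
definition partial_cube :: "'a set \<Rightarrow> ('a \<Rightarrow> 'a \<Rightarrow> bool) \<Rightarrow> bool" where
  "partial_cube V E \<longleftrightarrow> finite V \<and> V \<noteq> {} \<and>
     (\<forall>x\<in>V. \<not> E x x) \<and> (\<forall>x\<in>V. \<forall>y\<in>V. E x y \<longrightarrow> E y x) \<and>
     (\<exists>f :: 'a \<Rightarrow> nat set. (\<forall>x\<in>V. finite (f x)) \<and>
        (\<forall>u\<in>V. \<forall>v\<in>V. is_dist V E u v (card ((f u - f v) \<union> (f v - f u)))))"

definition graph_edges :: "'a set \<Rightarrow> ('a \<Rightarrow> 'a \<Rightarrow> bool) \<Rightarrow> 'a set set" where
  "graph_edges V E = {{x, y} | x y. x \<in> V \<and> y \<in> V \<and> E x y}"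

definition theta :: "'a set \<Rightarrow> ('a \<Rightarrow> 'a \<Rightarrow> bool) \<Rightarrow> 'a \<Rightarrow> 'a \<Rightarrow> 'a \<Rightarrow> 'a \<Rightarrow> bool" where
  "theta V E x y u v \<longleftrightarrow>
     gdist V E x u + gdist V E y v \<noteq> gdist V E x v + gdist V E y u"

definition theta_classes :: "'a set \<Rightarrow> ('a \<Rightarrow> 'a \<Rightarrow> bool) \<Rightarrow> 'a set set set" where
  "theta_classes V E =
     {{{u, v} | u v. u \<in> V \<and> v \<in> V \<and> E u v \<and> theta V E x y u v} | x y.
        x \<in> V \<and> y \<in> V \<and> E x y}"

definition halfspace :: "'a set \<Rightarrow> ('a \<Rightarrow> 'a \<Rightarrow> bool) \<Rightarrow> 'a \<Rightarrow> 'a \<Rightarrow> 'a set" where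
  "halfspace V E x y = {w \<in> V. gdist V E w x < gdist V E w y}"

definition crosses :: "'a set \<Rightarrow> ('a \<Rightarrow> 'a \<Rightarrow> bool) \<Rightarrow> 'a set set \<Rightarrow> 'a set \<Rightarrow> bool" where
  "crosses V E C S \<longleftrightarrow> (\<exists>x\<in>V. \<exists>y\<in>V. E x y \<and> {x, y} \<in> C \<and>
      S \<inter> halfspace V E x y \<noteq> {} \<and> S \<inter> halfspace V E y x \<noteq> {})"

definition convex_sub :: "'a set \<Rightarrow> ('a \<Rightarrow> 'a \<Rightarrow> bool) \<Rightarrow> 'a set \<Rightarrow> bool" where
  "convex_sub V E S \<longleftrightarrow> S \<subseteq> V \<and>
     (\<forall>u\<in>S. \<forall>v\<in>S. \<forall>xs. walk_betw V E u v xs \<and> length xs = Suc (gdist V E u v)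
        \<longrightarrow> set xs \<subseteq> S)"

definition conv :: "'a set \<Rightarrow> ('a \<Rightarrow> 'a \<Rightarrow> bool) \<Rightarrow> 'a set \<Rightarrow> 'a set" where
  "conv V E S = \<Inter> {T. convex_sub V E T \<and> S \<subseteq> T}"

definition antipodal :: "'a set \<Rightarrow> ('a \<Rightarrow> 'a \<Rightarrow> bool) \<Rightarrow> bool" where
  "antipodal V E \<longleftrightarrow> partial_cube V E \<and> (\<forall>x\<in>V. \<exists>y\<in>V. conv V E {x, y} = V)"

text \<open>Since all graphs are finite, the antipodal partial cube can be taken
with vertices in nat without loss of generality.\<close>
definition affine :: "'a set \<Rightarrow> ('a \<Rightarrow> 'a \<Rightarrow> bool) \<Rightarrow> bool" where
  "affine V E \<longleftrightarrow> (\<exists>(W :: nat set) F x y f. antipodal W F \<and> x \<in> W \<and> y \<in> W \<and> F x y \<and>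
     bij_betw f V (halfspace W F x y) \<and>
     (\<forall>a\<in>V. \<forall>b\<in>V. E a b \<longleftrightarrow> F (f a) (f b)))"

end

theory Submission
  imports Defs
begin

text \<open>
  Fix an isometric embedding of \<open>G\<close> into a hypercube: coordinates \<open>\<phi> z\<close> (finite sets of
  indices) whose Hamming distance is the graph distance. Then the \<open>\<Theta>\<close>-classes correspond to
  coordinates, the classes crossing \<open>conv(u,w)\<close> are the coordinates in which \<open>u\<close> and \<open>w\<close>
  differ, and \<open>conv(w,w') = G\<close> says that every vertex lies coordinatewise between \<open>w\<close> and
  \<open>w'\<close>. So the condition asks for antipodes \<open>w, w'\<close> such that no coordinate separates both
  \<open>u\<close> from \<open>w\<close> and \<open>v\<close> from \<open>w'\<close>.

  If \<open>G\<close> is a halfspace \<open>{z. (j \<in> \<phi> z) = c}\<close> of an antipodal partial cube \<open>A\<close>, a geodesic of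
  \<open>A\<close> from \<open>u\<close> to the antipode of \<open>v\<close> leaves \<open>G\<close> along an edge \<open>pq\<close> in direction \<open>j\<close>.
  Then \<open>p\<close> and the antipode of \<open>q\<close> in \<open>A\<close> form such a pair for \<open>G\<close>, because \<open>q\<close> lies
  between \<open>u\<close> and the antipode of \<open>v\<close>.

  Conversely, glue \<open>G\<close> to a mirror copy \<open>-G\<close> carrying the complementary coordinates plus a
  new coordinate \<open>N\<close>, joining \<open>w\<close> to \<open>-w'\<close> whenever \<open>w, w'\<close> are antipodes of \<open>G\<close>. For
  vertices \<open>s\<close> and \<open>-t\<close> the condition yields antipodes \<open>w, w'\<close> whose sets of coordinates to
  be flipped on the way \<open>s \<leadsto> w\<close> and \<open>-w' \<leadsto> -t\<close> are disjoint, so this path is a geodesic.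
  Hence the glued graph is a partial cube; it is antipodal with antipodes \<open>z, -z\<close>, and \<open>G\<close> is
  its halfspace \<open>N \<notin> \<phi>\<close>.
\<close>

section \<open>Hamming distance\<close>

definition hamming_dist :: "('b \<Rightarrow> nat set) \<Rightarrow> 'b \<Rightarrow> 'b \<Rightarrow> nat" where
  "hamming_dist g a b = card (sym_diff (g a) (g b))"

lemma hamming_dist_commute: "hamming_dist g a b = hamming_dist g b a"
  by (simp add: hamming_dist_def Un_commute)

lemma hamming_dist_self [simp]: "hamming_dist g a a = 0"
  by (simp add: hamming_dist_def)

lemma card_sym_diff_triangle:
  assumes "finite A" "finite B" "finite C"
  shows "card (sym_diff A C) \<le> card (sym_diff A B) + card (sym_diff B C)"
proof -
  have "card (sym_diff A C) \<le> card (sym_diff A B \<union> sym_diff B C)"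
    using assms by (intro card_mono) auto
  also have "\<dots> \<le> card (sym_diff A B) + card (sym_diff B C)"
    by (rule card_Un_le)
  finally show ?thesis .
qed

lemma card_sym_diff_add_le_imp_between:
  assumes "finite A" "finite B" "finite Z"
    and "card (sym_diff A Z) + card (sym_diff Z B) \<le> card (sym_diff A B)"
  shows "A \<inter> B \<subseteq> Z \<and> Z \<subseteq> A \<union> B"
proof -
  let ?X = "sym_diff A Z" and ?Y = "sym_diff Z B"
  have fin: "finite ?X" "finite ?Y" using assms by auto
  have "card (sym_diff A B) \<le> card (?X \<union> ?Y)"
    using fin by (intro card_mono) auto
  moreover have "card (?X \<union> ?Y) + card (?X \<inter> ?Y) = card ?X + card ?Y"
    using fin by (rule card_Un_Int[symmetric])
  ultimately have "card (?X \<inter> ?Y) = 0"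
    using assms(4) by linarith
  then have "?X \<inter> ?Y = {}"
    using fin by simp
  then show ?thesis by blast
qed

lemma card_sym_diff_add_eq_if_between:
  assumes "finite A" "finite B" "finite Z" "A \<inter> B \<subseteq> Z" "Z \<subseteq> A \<union> B"
  shows "card (sym_diff A Z) + card (sym_diff Z B) = card (sym_diff A B)"
proof -
  have "sym_diff A B = sym_diff A Z \<union> sym_diff Z B" "sym_diff A Z \<inter> sym_diff Z B = {}"
    using assms(4,5) by auto
  then show ?thesis
    using assms(1-3) by (simp add: card_Un_disjoint)
qed

lemma card_sym_diff_singleton:
  assumes "finite A"
  shows "int (card (sym_diff A {k})) = int (card A) + (if k \<in> A then -1 else 1)"
proof (cases "k \<in> A")
  case True
  then have "sym_diff A {k} = A - {k}" "0 < card A"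
    using assms card_gt_0_iff by blast+
  then show ?thesis using True by (simp add: of_nat_diff)
next
  case False
  then have "sym_diff A {k} = insert k A" by blast
  then show ?thesis using False assms by simp
qed

section \<open>Walks\<close>

lemma not_walk_Nil [simp]: "\<not> walk V E []"
  by (simp add: walk_def)

lemma walk_singleton [simp]: "walk V E [x] \<longleftrightarrow> x \<in> V"
  by (auto simp: walk_def)

lemma walk_Cons_Cons [simp]:
  "walk V E (x # y # zs) \<longleftrightarrow> x \<in> V \<and> E x y \<and> walk V E (y # zs)"
  by (auto simp: walk_def nth_Cons less_Suc_eq_0_disj split: nat.splits)

lemma walk_append:
  assumes "walk V E xs" "walk V E ys" "last xs = hd ys"
  shows "walk V E (xs @ tl ys)"
  using assms
proof (induction xs rule: induct_list012)
  case (2 x)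
  then show ?case by (cases ys) auto
qed auto

lemma walk_betw_append:
  assumes "walk_betw V E u v xs" "walk_betw V E v w ys"
  shows "walk_betw V E u w (xs @ tl ys)" and "length (xs @ tl ys) = length xs + length ys - 1"
proof -
  have ne: "xs \<noteq> []" "ys \<noteq> []" using assms by (auto simp: walk_betw_def walk_def)
  have "last (xs @ tl ys) = last ys"
    using ne assms by (cases ys) (auto simp: walk_betw_def)
  then show "walk_betw V E u w (xs @ tl ys)"
    using assms ne walk_append[of V E xs ys] by (auto simp: walk_betw_def)
  show "length (xs @ tl ys) = length xs + length ys - 1"
    using ne by (cases ys) auto
qed

lemma walk_betw_map:
  assumes "walk_betw V E u v xs" "\<forall>p\<in>set xs. h p \<in> V'"
    and "\<forall>p\<in>set xs. \<forall>q\<in>set xs. E p q \<longrightarrow> E' (h p) (h q)"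
  shows "walk_betw V' E' (h u) (h v) (map h xs)"
proof -
  have "walk V' E' (map h ys)" if "walk V E ys" "set ys \<subseteq> set xs" for ys
    using that by (induction ys rule: induct_list012) (use assms(2,3) in auto)
  then have "walk V' E' (map h xs)"
    using assms(1) by (simp add: walk_betw_def)
  moreover have "xs \<noteq> []" using assms(1) by (auto simp: walk_betw_def walk_def)
  ultimately show ?thesis
    using assms(1) by (simp add: walk_betw_def hd_map last_map)
qed

lemma walk_betw_rev:
  assumes "walk_betw V E u v xs" "\<forall>x\<in>V. \<forall>y\<in>V. E x y \<longrightarrow> E y x"
  shows "walk_betw V E v u (rev xs)"
proof -
  have "walk V E (rev ys)" if "walk V E ys" for ys
    using that
  proof (induction ys rule: induct_list012)
    case (3 x y zs)
    then have x: "x \<in> V" "E x y" and yzs: "walk V E (y # zs)"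
      by simp_all
    then have "y \<in> V" by (simp add: walk_def)
    then have "walk V E [y, x]" using x assms(2) by simp
    from walk_append[OF "3.IH"(2)[OF yzs] this] show ?case by simp
  qed auto
  then have "walk V E (rev xs)"
    using assms(1) by (simp add: walk_betw_def)
  moreover have "xs \<noteq> []" using assms(1) by (auto simp: walk_betw_def walk_def)
  ultimately show ?thesis
    using assms(1) by (simp add: walk_betw_def hd_rev last_rev)
qed

lemma walk_hamming_dist_nth_le:
  assumes "walk V E xs" "\<forall>a\<in>V. \<forall>b\<in>V. E a b \<longrightarrow> hamming_dist g a b \<le> 1"
    and "\<forall>a\<in>V. finite (g a)" "i \<le> j" "j < length xs"
  shows "hamming_dist g (xs ! i) (xs ! j) \<le> j - i"
  using assms(4,5)
proof (induction j)
  case (Suc j)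
  show ?case
  proof (cases "i = Suc j")
    case False
    have in_V: "set xs \<subseteq> V" using assms(1) by (simp add: walk_def)
    then have fin: "finite (g (xs ! k))" if "k < length xs" for k
      using that assms(3) by (auto dest: nth_mem)
    have "hamming_dist g (xs ! i) (xs ! Suc j)
        \<le> hamming_dist g (xs ! i) (xs ! j) + hamming_dist g (xs ! j) (xs ! Suc j)"
      unfolding hamming_dist_def
      by (rule card_sym_diff_triangle) (use Suc.prems in \<open>auto simp: fin\<close>)
    moreover have "hamming_dist g (xs ! i) (xs ! j) \<le> j - i"
      using Suc False by simp
    moreover have "E (xs ! j) (xs ! Suc j)" "xs ! j \<in> V" "xs ! Suc j \<in> V"
      using Suc.prems assms(1) in_V by (auto simp: walk_def)
    then have "hamming_dist g (xs ! j) (xs ! Suc j) \<le> 1"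
      using assms(2) by blast
    ultimately show ?thesis
      using Suc.prems False by linarith
  qed simp
qed simp

section \<open>Partial cubes as isometric subgraphs of hypercubes\<close>

definition theta_class :: "'a set \<Rightarrow> ('a \<Rightarrow> 'a \<Rightarrow> bool) \<Rightarrow> 'a \<Rightarrow> 'a \<Rightarrow> 'a set set" where
  "theta_class V E x y = {{a, b} | a b. a \<in> V \<and> b \<in> V \<and> E a b \<and> theta V E x y a b}"

lemma theta_classes_eq: "theta_classes V E = {theta_class V E x y | x y. x \<in> V \<and> y \<in> V \<and> E x y}"
  by (simp add: theta_classes_def theta_class_def)

lemma convex_sub_vertices: "convex_sub V E V"
  by (auto simp: convex_sub_def walk_betw_def walk_def)

lemma subset_conv: "S \<subseteq> conv V E S"
  by (auto simp: conv_def)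

lemma conv_least: "convex_sub V E T \<Longrightarrow> S \<subseteq> T \<Longrightarrow> conv V E S \<subseteq> T"
  by (auto simp: conv_def)

lemma conv_subset_vertices: "S \<subseteq> V \<Longrightarrow> conv V E S \<subseteq> V"
  by (rule conv_least[OF convex_sub_vertices])

locale cube_embedding =
  fixes V :: "'a set" and E :: "'a \<Rightarrow> 'a \<Rightarrow> bool" and \<phi> :: "'a \<Rightarrow> nat set"
  assumes irrefl: "\<forall>x\<in>V. \<not> E x x"
    and sym: "\<forall>x\<in>V. \<forall>y\<in>V. E x y \<longrightarrow> E y x"
    and finite_coords: "\<forall>x\<in>V. finite (\<phi> x)"
    and is_dist_hamming_dist: "\<forall>u\<in>V. \<forall>v\<in>V. is_dist V E u v (hamming_dist \<phi> u v)"
begin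

lemma gdist_eq_hamming_dist: "u \<in> V \<Longrightarrow> v \<in> V \<Longrightarrow> gdist V E u v = hamming_dist \<phi> u v"
  using is_dist_hamming_dist unfolding gdist_def is_dist_def
  by (intro Least_equality) (blast, metis Suc_le_mono)

lemma geodesic_exists:
  assumes "u \<in> V" "v \<in> V"
  obtains xs where "walk_betw V E u v xs" "length xs = Suc (hamming_dist \<phi> u v)"
  using is_dist_hamming_dist assms unfolding is_dist_def by blast

lemma walk_betw_length_ge:
  "walk_betw V E u v xs \<Longrightarrow> u \<in> V \<Longrightarrow> v \<in> V \<Longrightarrow> Suc (hamming_dist \<phi> u v) \<le> length xs"
  using is_dist_hamming_dist unfolding is_dist_def by blast

lemma eq_if_hamming_dist_eq_0:
  assumes "u \<in> V" "v \<in> V" "hamming_dist \<phi> u v = 0"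
  shows "u = v"
proof -
  obtain xs where "walk_betw V E u v xs" "length xs = Suc (hamming_dist \<phi> u v)"
    by (rule geodesic_exists[OF assms(1,2)])
  then show ?thesis
    using assms(3) by (auto simp: walk_betw_def length_Suc_conv)
qed

lemma adjacent_iff_hamming_dist_eq_1:
  assumes "u \<in> V" "v \<in> V"
  shows "E u v \<longleftrightarrow> hamming_dist \<phi> u v = 1"
proof
  assume "E u v"
  then have "walk_betw V E u v [u, v]"
    using assms by (simp add: walk_betw_def)
  from walk_betw_length_ge[OF this assms] have "hamming_dist \<phi> u v \<le> 1"
    by simp
  moreover have "u \<noteq> v" using \<open>E u v\<close> irrefl assms by auto
  ultimately show "hamming_dist \<phi> u v = 1"
    using eq_if_hamming_dist_eq_0[OF assms] by fastforce
next
  assume "hamming_dist \<phi> u v = 1"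
  moreover obtain xs where "walk_betw V E u v xs" "length xs = Suc (hamming_dist \<phi> u v)"
    by (rule geodesic_exists[OF assms])
  ultimately show "E u v"
    by (auto simp: walk_betw_def numeral_2_eq_2 length_Suc_conv)
qed

lemma edge_coordinate:
  assumes "x \<in> V" "y \<in> V" "E x y"
  obtains i where "sym_diff (\<phi> x) (\<phi> y) = {i}"
  using adjacent_iff_hamming_dist_eq_1[OF assms(1,2)] assms(3)
  unfolding hamming_dist_def by (meson card_1_singletonE)

lemma geodesic_vertex_between:
  assumes "walk_betw V E u v xs" "length xs = Suc (hamming_dist \<phi> u v)" "z \<in> set xs"
  shows "\<phi> u \<inter> \<phi> v \<subseteq> \<phi> z \<and> \<phi> z \<subseteq> \<phi> u \<union> \<phi> v"
proof -
  obtain k where k: "k < length xs" "xs ! k = z"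
    using assms(3) by (metis in_set_conv_nth)
  have ne: "xs \<noteq> []" using assms(2) by auto
  have w: "walk V E xs" and first: "xs ! 0 = u" and final: "xs ! (length xs - 1) = v"
    using assms(1) ne by (auto simp: walk_betw_def hd_conv_nth last_conv_nth)
  have in_V: "u \<in> V" "v \<in> V" "z \<in> V"
    using w assms(3) first final ne by (auto simp: walk_def)
  have edges: "\<forall>a\<in>V. \<forall>b\<in>V. E a b \<longrightarrow> hamming_dist \<phi> a b \<le> 1"
    by (simp add: adjacent_iff_hamming_dist_eq_1)
  have "hamming_dist \<phi> u z \<le> k" "hamming_dist \<phi> z v \<le> length xs - 1 - k"
    using walk_hamming_dist_nth_le[OF w edges finite_coords, of 0 k]
      walk_hamming_dist_nth_le[OF w edges finite_coords, of k "length xs - 1"] k first final by auto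
  then have "card (sym_diff (\<phi> u) (\<phi> z)) + card (sym_diff (\<phi> z) (\<phi> v))
      \<le> card (sym_diff (\<phi> u) (\<phi> v))"
    using assms(2) k unfolding hamming_dist_def by simp
  then show ?thesis
    by (rule card_sym_diff_add_le_imp_between[rotated 3]) (use finite_coords in_V in auto)
qed

lemma convex_coordinate_halfspace: "convex_sub V E {z \<in> V. (i \<in> \<phi> z) = c}"
  unfolding convex_sub_def
proof (intro conjI ballI allI impI subsetI)
  fix u v xs z
  assume u: "u \<in> {z \<in> V. (i \<in> \<phi> z) = c}" and v: "v \<in> {z \<in> V. (i \<in> \<phi> z) = c}"
    and xs: "walk_betw V E u v xs \<and> length xs = Suc (gdist V E u v)" and z: "z \<in> set xs"
  have "z \<in> V" using xs z by (auto simp: walk_betw_def walk_def)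
  moreover have "\<phi> u \<inter> \<phi> v \<subseteq> \<phi> z \<and> \<phi> z \<subseteq> \<phi> u \<union> \<phi> v"
    using geodesic_vertex_between[of u v xs z] xs z u v gdist_eq_hamming_dist by auto
  ultimately show "z \<in> {z \<in> V. (i \<in> \<phi> z) = c}" using u v by auto
qed auto

lemma mem_conv_if_between:
  assumes "u \<in> V" "v \<in> V" "z \<in> V" "\<phi> u \<inter> \<phi> v \<subseteq> \<phi> z" "\<phi> z \<subseteq> \<phi> u \<union> \<phi> v"
  shows "z \<in> conv V E {u, v}"
  unfolding conv_def
proof (rule InterI)
  fix T assume "T \<in> {T. convex_sub V E T \<and> {u, v} \<subseteq> T}"
  then have T: "convex_sub V E T" "u \<in> T" "v \<in> T" by auto
  obtain xs where xs: "walk_betw V E u z xs" "length xs = Suc (hamming_dist \<phi> u z)"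
    using assms(1,3) by (rule geodesic_exists)
  obtain ys where ys: "walk_betw V E z v ys" "length ys = Suc (hamming_dist \<phi> z v)"
    using assms(3,2) by (rule geodesic_exists)
  have "hamming_dist \<phi> u z + hamming_dist \<phi> z v = hamming_dist \<phi> u v"
    unfolding hamming_dist_def
    by (rule card_sym_diff_add_eq_if_between) (use assms finite_coords in auto)
  then have "walk_betw V E u v (xs @ tl ys)" "length (xs @ tl ys) = Suc (gdist V E u v)"
    using walk_betw_append[OF xs(1) ys(1)] xs(2) ys(2) gdist_eq_hamming_dist assms(1,2) by simp_all
  then have "set (xs @ tl ys) \<subseteq> T"
    using T unfolding convex_sub_def by blast
  moreover have "z \<in> set xs"
    using xs by (auto simp: walk_betw_def walk_def)
  ultimately show "z \<in> T" by auto
qed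

lemma conv_pair_separates:
  assumes "u \<in> V" "v \<in> V" "conv V E {u, v} = V" "z1 \<in> V" "z2 \<in> V"
    and "(i \<in> \<phi> z1) \<noteq> (i \<in> \<phi> z2)"
  shows "i \<in> sym_diff (\<phi> u) (\<phi> v)"
proof (rule ccontr)
  assume "i \<notin> sym_diff (\<phi> u) (\<phi> v)"
  then have "{u, v} \<subseteq> {z \<in> V. (i \<in> \<phi> z) = (i \<in> \<phi> u)}"
    using assms(1,2) by auto
  from conv_least[OF convex_coordinate_halfspace this] assms show False
    by auto
qed

lemma conv_pair_eq_vertices_iff:
  assumes "u \<in> V" "v \<in> V"
  shows "conv V E {u, v} = V \<longleftrightarrow> (\<forall>z\<in>V. \<phi> u \<inter> \<phi> v \<subseteq> \<phi> z \<and> \<phi> z \<subseteq> \<phi> u \<union> \<phi> v)"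
proof
  assume conv: "conv V E {u, v} = V"
  show "\<forall>z\<in>V. \<phi> u \<inter> \<phi> v \<subseteq> \<phi> z \<and> \<phi> z \<subseteq> \<phi> u \<union> \<phi> v"
  proof (intro ballI conjI subsetI)
    fix z i assume z: "z \<in> V"
    show "i \<in> \<phi> z" if "i \<in> \<phi> u \<inter> \<phi> v"
      using that conv_pair_separates[OF assms conv z assms(1), of i] by auto
    show "i \<in> \<phi> u \<union> \<phi> v" if "i \<in> \<phi> z"
      using that conv_pair_separates[OF assms conv z assms(1), of i] by auto
  qed
next
  assume "\<forall>z\<in>V. \<phi> u \<inter> \<phi> v \<subseteq> \<phi> z \<and> \<phi> z \<subseteq> \<phi> u \<union> \<phi> v"
  then have "V \<subseteq> conv V E {u, v}"
    using mem_conv_if_between assms by blast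
  moreover have "conv V E {u, v} \<subseteq> V"
    using assms by (intro conv_subset_vertices) auto
  ultimately show "conv V E {u, v} = V" by blast
qed

lemma halfspace_eq_coordinate_halfspace:
  assumes "x \<in> V" "y \<in> V" "sym_diff (\<phi> x) (\<phi> y) = {i}"
  shows "halfspace V E x y = {z \<in> V. (i \<in> \<phi> z) = (i \<in> \<phi> x)}"
proof -
  have "hamming_dist \<phi> z x < hamming_dist \<phi> z y \<longleftrightarrow> (i \<in> \<phi> z) = (i \<in> \<phi> x)" if z: "z \<in> V" for z
  proof -
    let ?D = "sym_diff (\<phi> z) (\<phi> x)"
    have "finite ?D" using finite_coords z assms(1) by auto
    moreover have "sym_diff (\<phi> z) (\<phi> y) = sym_diff ?D {i}"
      using assms(3) by blast
    ultimately have "int (hamming_dist \<phi> z y) = int (hamming_dist \<phi> z x) + (if i \<in> ?D then -1 else 1)"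
      by (simp add: hamming_dist_def card_sym_diff_singleton)
    moreover have "i \<in> ?D \<longleftrightarrow> (i \<in> \<phi> z) \<noteq> (i \<in> \<phi> x)" by auto
    ultimately show ?thesis by auto
  qed
  then show ?thesis
    unfolding halfspace_def using gdist_eq_hamming_dist assms by auto
qed

lemma theta_iff_same_coordinate:
  assumes "x \<in> V" "y \<in> V" "sym_diff (\<phi> x) (\<phi> y) = {i}"
    and "u \<in> V" "v \<in> V" "sym_diff (\<phi> u) (\<phi> v) = {j}"
  shows "theta V E x y u v \<longleftrightarrow> i = j"
proof -
  define D where "D = sym_diff (\<phi> x) (\<phi> u)"
  define flip where "flip k = (if k \<in> D then -1 else 1 :: int)" for k
  have fin: "finite D" using finite_coords assms(1,4) by (auto simp: D_def)
  have xu: "sym_diff (\<phi> x) (\<phi> u) = D" and xv: "sym_diff (\<phi> x) (\<phi> v) = sym_diff D {j}"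
    and yu: "sym_diff (\<phi> y) (\<phi> u) = sym_diff D {i}"
    and yv: "sym_diff (\<phi> y) (\<phi> v) = sym_diff (sym_diff D {i}) {j}"
    using assms(3,6) unfolding D_def by blast+
  have "int (card (sym_diff D {i})) = int (card D) + flip i"
    "int (card (sym_diff D {j})) = int (card D) + flip j"
    using card_sym_diff_singleton[OF fin] by (simp_all add: flip_def)
  moreover have "int (card (sym_diff (sym_diff D {i}) {j}))
      = (if i = j then int (card D) else int (card D) + flip i + flip j)"
    using card_sym_diff_singleton[OF fin] card_sym_diff_singleton[of "sym_diff D {i}" j] fin
    by (auto simp: flip_def)
  ultimately show ?thesis
    unfolding theta_def using assms gdist_eq_hamming_dist
    by (simp add: hamming_dist_def xu xv yu yv flip_def split: if_splits)
qed

lemma geodesic_crosses_coordinate: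
  assumes "a \<in> V" "b \<in> V" "(j \<in> \<phi> a) \<noteq> (j \<in> \<phi> b)"
  obtains p q where "p \<in> V" "q \<in> V" "E p q" "sym_diff (\<phi> p) (\<phi> q) = {j}"
    "(j \<in> \<phi> p) = (j \<in> \<phi> a)" "\<phi> a \<inter> \<phi> b \<subseteq> \<phi> q \<and> \<phi> q \<subseteq> \<phi> a \<union> \<phi> b"
proof -
  obtain xs where xs: "walk_betw V E a b xs" "length xs = Suc (hamming_dist \<phi> a b)"
    using assms(1,2) by (rule geodesic_exists)
  let ?n = "length xs - 1"
  have ne: "xs \<noteq> []" using xs(2) by auto
  have walk: "walk V E xs" and ends: "xs ! 0 = a" "xs ! ?n = b"
    using xs(1) hd_conv_nth[OF ne] last_conv_nth[OF ne] by (simp_all add: walk_betw_def)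
  obtain k where k: "k < ?n" "(j \<in> \<phi> (xs ! k)) = (j \<in> \<phi> a)"
    "(j \<in> \<phi> (xs ! Suc k)) \<noteq> (j \<in> \<phi> a)"
    using ex_least_nat_less[of "\<lambda>k. (j \<in> \<phi> (xs ! k)) \<noteq> (j \<in> \<phi> a)" ?n] ends assms(3) by auto
  have edge: "xs ! k \<in> V" "xs ! Suc k \<in> V" "E (xs ! k) (xs ! Suc k)"
    using walk k(1) by (auto simp: walk_def)
  obtain j' where "sym_diff (\<phi> (xs ! k)) (\<phi> (xs ! Suc k)) = {j'}"
    by (rule edge_coordinate[OF edge])
  moreover have "j \<in> sym_diff (\<phi> (xs ! k)) (\<phi> (xs ! Suc k))"
    using k(2,3) by auto
  ultimately have "sym_diff (\<phi> (xs ! k)) (\<phi> (xs ! Suc k)) = {j}"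
    by auto
  moreover have "\<phi> a \<inter> \<phi> b \<subseteq> \<phi> (xs ! Suc k) \<and> \<phi> (xs ! Suc k) \<subseteq> \<phi> a \<union> \<phi> b"
    using geodesic_vertex_between[OF xs] k(1) by auto
  ultimately show thesis
    by (rule that[OF edge _ k(2)])
qed

lemma theta_class_member_coordinate:
  assumes "x \<in> V" "y \<in> V" "sym_diff (\<phi> x) (\<phi> y) = {i}" "{x', y'} \<in> theta_class V E x y"
  shows "sym_diff (\<phi> x') (\<phi> y') = {i}"
proof -
  obtain a b where ab: "{x', y'} = {a, b}" "a \<in> V" "b \<in> V" "E a b" "theta V E x y a b"
    using assms(4) unfolding theta_class_def by blast
  obtain j where j: "sym_diff (\<phi> a) (\<phi> b) = {j}"
    by (rule edge_coordinate[OF ab(2-4)])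
  have "j = i"
    using theta_iff_same_coordinate[OF assms(1-3) ab(2,3) j] ab(5) by simp
  then have "sym_diff (\<phi> a) (\<phi> b) = {i}" "sym_diff (\<phi> b) (\<phi> a) = {i}"
    using j by blast+
  then show ?thesis
    using ab(1) by (auto simp: doubleton_eq_iff)
qed

lemma crosses_theta_class_conv_iff:
  assumes "x \<in> V" "y \<in> V" "E x y" "sym_diff (\<phi> x) (\<phi> y) = {i}" "u \<in> V" "w \<in> V"
  shows "crosses V E (theta_class V E x y) (conv V E {u, w}) \<longleftrightarrow> i \<in> sym_diff (\<phi> u) (\<phi> w)"
proof
  assume "crosses V E (theta_class V E x y) (conv V E {u, w})"
  then obtain x' y' where x'y': "x' \<in> V" "y' \<in> V" "{x', y'} \<in> theta_class V E x y"
    and meets: "conv V E {u, w} \<inter> halfspace V E x' y' \<noteq> {}"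
      "conv V E {u, w} \<inter> halfspace V E y' x' \<noteq> {}"
    unfolding crosses_def by blast
  then have coord: "sym_diff (\<phi> x') (\<phi> y') = {i}"
    using theta_class_member_coordinate[OF assms(1,2,4)] by blast
  have "halfspace V E x' y' = {z \<in> V. (i \<in> \<phi> z) = (i \<in> \<phi> x')}"
    "halfspace V E y' x' = {z \<in> V. (i \<in> \<phi> z) = (i \<in> \<phi> y')}"
    using coord halfspace_eq_coordinate_halfspace[OF x'y'(1,2) coord]
      halfspace_eq_coordinate_halfspace[OF x'y'(2,1), of i] by (simp_all add: Un_commute)
  then obtain z1 z2 where z: "z1 \<in> conv V E {u, w}" "z2 \<in> conv V E {u, w}"
    "(i \<in> \<phi> z1) = (i \<in> \<phi> x')" "(i \<in> \<phi> z2) = (i \<in> \<phi> y')"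
    using meets by blast
  show "i \<in> sym_diff (\<phi> u) (\<phi> w)"
  proof (rule ccontr)
    assume "i \<notin> sym_diff (\<phi> u) (\<phi> w)"
    then have "conv V E {u, w} \<subseteq> {z \<in> V. (i \<in> \<phi> z) = (i \<in> \<phi> u)}"
      using assms(5,6) by (intro conv_least[OF convex_coordinate_halfspace]) auto
    then show False
      using z coord by blast
  qed
next
  assume i: "i \<in> sym_diff (\<phi> u) (\<phi> w)"
  have "{x, y} \<in> theta_class V E x y"
    using assms(1-4) theta_iff_same_coordinate[OF assms(1,2,4) assms(1,2,4)]
    unfolding theta_class_def by blast
  moreover have "{u, w} \<subseteq> conv V E {u, w}"
    by (rule subset_conv)
  moreover have "halfspace V E x y = {z \<in> V. (i \<in> \<phi> z) = (i \<in> \<phi> x)}"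
    "halfspace V E y x = {z \<in> V. (i \<in> \<phi> z) = (i \<in> \<phi> y)}"
    using assms(4) halfspace_eq_coordinate_halfspace[OF assms(1,2,4)]
      halfspace_eq_coordinate_halfspace[OF assms(2,1), of i] by (simp_all add: Un_commute)
  then have "halfspace V E x y \<inter> {u, w} \<noteq> {}" "halfspace V E y x \<inter> {u, w} \<noteq> {}"
    using assms i by auto
  ultimately show "crosses V E (theta_class V E x y) (conv V E {u, w})"
    unfolding crosses_def using assms(1-3) by blast
qed

lemma theta_classes_crossing_disjoint_iff:
  assumes "u \<in> V" "v \<in> V" "w \<in> V" "w' \<in> V"
  shows "{C \<in> theta_classes V E. crosses V E C (conv V E {u, w})} \<inter>
      {C \<in> theta_classes V E. crosses V E C (conv V E {v, w'})} = {}
    \<longleftrightarrow> sym_diff (\<phi> u) (\<phi> w) \<inter> sym_diff (\<phi> v) (\<phi> w') = {}"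
proof -
  have "(\<exists>C\<in>theta_classes V E. crosses V E C (conv V E {u, w}) \<and> crosses V E C (conv V E {v, w'}))
    \<longleftrightarrow> (\<exists>i. i \<in> sym_diff (\<phi> u) (\<phi> w) \<and> i \<in> sym_diff (\<phi> v) (\<phi> w'))"
  proof
    assume "\<exists>C\<in>theta_classes V E. crosses V E C (conv V E {u, w}) \<and> crosses V E C (conv V E {v, w'})"
    then obtain x y where xy: "x \<in> V" "y \<in> V" "E x y"
      and crosses: "crosses V E (theta_class V E x y) (conv V E {u, w})"
        "crosses V E (theta_class V E x y) (conv V E {v, w'})"
      unfolding theta_classes_eq by blast
    obtain i where "sym_diff (\<phi> x) (\<phi> y) = {i}"
      using xy by (rule edge_coordinate)
    then show "\<exists>i. i \<in> sym_diff (\<phi> u) (\<phi> w) \<and> i \<in> sym_diff (\<phi> v) (\<phi> w')"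
      using crosses crosses_theta_class_conv_iff xy assms by blast
  next
    assume "\<exists>i. i \<in> sym_diff (\<phi> u) (\<phi> w) \<and> i \<in> sym_diff (\<phi> v) (\<phi> w')"
    then obtain i where i: "i \<in> sym_diff (\<phi> u) (\<phi> w)" "i \<in> sym_diff (\<phi> v) (\<phi> w')"
      by blast
    have "(i \<in> \<phi> u) \<noteq> (i \<in> \<phi> w)" using i(1) by blast
    then obtain x y where xy: "x \<in> V" "y \<in> V" "E x y" "sym_diff (\<phi> x) (\<phi> y) = {i}"
      and "(i \<in> \<phi> x) = (i \<in> \<phi> u)" "\<phi> u \<inter> \<phi> w \<subseteq> \<phi> y \<and> \<phi> y \<subseteq> \<phi> u \<union> \<phi> w"
      by (rule geodesic_crosses_coordinate[OF assms(1,3)])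
    then show "\<exists>C\<in>theta_classes V E. crosses V E C (conv V E {u, w}) \<and> crosses V E C (conv V E {v, w'})"
      using crosses_theta_class_conv_iff[OF xy] assms i unfolding theta_classes_eq by blast
  qed
  then show ?thesis by blast
qed

end

lemma cube_embedding_if_partial_cube:
  assumes "partial_cube V E"
  obtains \<phi> where "cube_embedding V E \<phi>"
  using assms unfolding partial_cube_def cube_embedding_def hamming_dist_def by blast

lemma partial_cube_if_cube_embedding:
  assumes "cube_embedding V E \<phi>" "finite V" "V \<noteq> {}"
  shows "partial_cube V E"
  using assms unfolding partial_cube_def cube_embedding_def hamming_dist_def by blast

lemma cube_embedding_translate:
  assumes "cube_embedding V E \<phi>" "finite A"
  shows "cube_embedding V E (\<lambda>z. sym_diff (\<phi> z) A)"
proof -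
  have "sym_diff (sym_diff X A) (sym_diff Y A) = sym_diff X Y" for X Y :: "nat set"
    by blast
  then have "hamming_dist (\<lambda>z. sym_diff (\<phi> z) A) = hamming_dist \<phi>"
    by (simp add: hamming_dist_def fun_eq_iff)
  then show ?thesis
    using assms unfolding cube_embedding_def by auto
qed

lemma cube_embedding_if_geodesics:
  assumes finite: "\<And>a. a \<in> W \<Longrightarrow> finite (g a)"
    and adjacent: "\<And>a b. a \<in> W \<Longrightarrow> b \<in> W \<Longrightarrow> F a b \<longleftrightarrow> hamming_dist g a b = 1"
    and geodesic: "\<And>a b. a \<in> W \<Longrightarrow> b \<in> W \<Longrightarrow>
      \<exists>xs. walk_betw W F a b xs \<and> length xs = Suc (hamming_dist g a b)"
  shows "cube_embedding W F g"
proof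
  show "\<forall>x\<in>W. \<not> F x x" "\<forall>x\<in>W. \<forall>y\<in>W. F x y \<longrightarrow> F y x" "\<forall>x\<in>W. finite (g x)"
    using adjacent finite by (auto simp: hamming_dist_commute[of g])
  show "\<forall>a\<in>W. \<forall>b\<in>W. is_dist W F a b (hamming_dist g a b)"
  proof (intro ballI)
    fix a b assume ab: "a \<in> W" "b \<in> W"
    have "Suc (hamming_dist g a b) \<le> length xs" if "walk_betw W F a b xs" for xs
    proof -
      have "walk W F xs" "xs ! 0 = a" "xs ! (length xs - 1) = b" "xs \<noteq> []"
        using that by (auto simp: walk_betw_def walk_def hd_conv_nth last_conv_nth)
      moreover have "hamming_dist g (xs ! 0) (xs ! (length xs - 1)) \<le> length xs - 1 - 0"
        by (rule walk_hamming_dist_nth_le) (use \<open>walk W F xs\<close> \<open>xs \<noteq> []\<close> adjacent finite in auto)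
      ultimately show ?thesis by (cases xs) auto
    qed
    then show "is_dist W F a b (hamming_dist g a b)"
      unfolding is_dist_def using geodesic[OF ab] by blast
  qed
qed

section \<open>Halfspaces of antipodal partial cubes\<close>

definition separating_antipodes :: "'a set \<Rightarrow> ('a \<Rightarrow> 'a \<Rightarrow> bool) \<Rightarrow> 'a \<Rightarrow> 'a \<Rightarrow> bool" where
  "separating_antipodes V E u v \<longleftrightarrow> (\<exists>w\<in>V. \<exists>w'\<in>V. conv V E {w, w'} = V \<and>
    {C \<in> theta_classes V E. crosses V E C (conv V E {u, w})} \<inter>
    {C \<in> theta_classes V E. crosses V E C (conv V E {v, w'})} = {})"

context cube_embedding
begin

lemma cube_embedding_pullback:
  assumes "convex_sub V E H" "bij_betw f V' H" "\<forall>a\<in>V'. \<forall>b\<in>V'. E' a b \<longleftrightarrow> E (f a) (f b)"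
  shows "cube_embedding V' E' (\<phi> \<circ> f)"
proof
  have fH: "f a \<in> H" "f a \<in> V" if "a \<in> V'" for a
    using assms(1,2) that by (auto simp: bij_betw_def convex_sub_def)
  show "\<forall>x\<in>V'. \<not> E' x x" "\<forall>x\<in>V'. \<forall>y\<in>V'. E' x y \<longrightarrow> E' y x" "\<forall>x\<in>V'. finite ((\<phi> \<circ> f) x)"
    using irrefl sym finite_coords fH assms(3) by auto
  show "\<forall>a\<in>V'. \<forall>b\<in>V'. is_dist V' E' a b (hamming_dist (\<phi> \<circ> f) a b)"
  proof (intro ballI)
    fix a b assume ab: "a \<in> V'" "b \<in> V'"
    let ?h = "inv_into V' f"
    have h: "?h p \<in> V'" "f (?h p) = p" if "p \<in> H" for p
      using that assms(2) by (auto simp: bij_betw_def inv_into_into f_inv_into_f)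
    have dist: "hamming_dist (\<phi> \<circ> f) a b = hamming_dist \<phi> (f a) (f b)"
      by (simp add: hamming_dist_def)
    obtain ys where ys: "walk_betw V E (f a) (f b) ys" "length ys = Suc (hamming_dist \<phi> (f a) (f b))"
      using fH ab by (meson geodesic_exists)
    then have "set ys \<subseteq> H"
      using assms(1) fH ab gdist_eq_hamming_dist unfolding convex_sub_def by metis
    then have "walk_betw V' E' (?h (f a)) (?h (f b)) (map ?h ys)"
      using ys(1) h assms(3) by (intro walk_betw_map) (auto simp: subset_iff)
    moreover have "?h (f a) = a" "?h (f b) = b"
      using assms(2) ab by (auto simp: bij_betw_def)
    moreover have "Suc (hamming_dist (\<phi> \<circ> f) a b) \<le> length xs" if "walk_betw V' E' a b xs" for xs
    proof -
      have "set xs \<subseteq> V'" using that by (simp add: walk_betw_def walk_def)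
      then have "walk_betw V E (f a) (f b) (map f xs)"
        using that fH assms(3) by (intro walk_betw_map) (auto simp: subset_iff)
      from walk_betw_length_ge[OF this] show ?thesis
        using fH ab dist by simp
    qed
    ultimately show "is_dist V' E' a b (hamming_dist (\<phi> \<circ> f) a b)"
      unfolding is_dist_def using ys(2) dist by (metis length_map)
  qed
qed

lemma antipode_eq_complement:
  assumes "v0 \<in> V" "\<phi> v0 = {}" "w \<in> V" "w' \<in> V" "conv V E {w, w'} = V"
  shows "\<phi> w' = \<Union> (\<phi> ` V) - \<phi> w"
  using conv_pair_eq_vertices_iff[OF assms(3,4)] assms by blast

lemma separating_antipodes_complement:
  assumes "v0 \<in> V" "\<phi> v0 = {}" "s \<in> V" "t \<in> V" "separating_antipodes V E s t"
  shows "\<exists>w\<in>V. \<exists>w'\<in>V. \<phi> w' = \<Union> (\<phi> ` V) - \<phi> w \<and>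
    sym_diff (\<phi> s) (\<phi> w) \<inter> sym_diff (\<phi> t) (\<phi> w') = {}"
proof -
  obtain w w' where w: "w \<in> V" "w' \<in> V" "conv V E {w, w'} = V"
    and disjoint: "{C \<in> theta_classes V E. crosses V E C (conv V E {s, w})} \<inter>
      {C \<in> theta_classes V E. crosses V E C (conv V E {t, w'})} = {}"
    using assms(5) unfolding separating_antipodes_def by blast
  have "\<phi> w' = \<Union> (\<phi> ` V) - \<phi> w"
    by (rule antipode_eq_complement[OF assms(1,2) w])
  moreover have "sym_diff (\<phi> s) (\<phi> w) \<inter> sym_diff (\<phi> t) (\<phi> w') = {}"
    using theta_classes_crossing_disjoint_iff[OF assms(3,4) w(1,2)] disjoint by simp
  ultimately show ?thesis
    using w(1,2) by blast
qed

lemma coordinate_halfspace_between: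
  assumes H: "H = {z \<in> V. (j \<in> \<phi> z) = c}" and "p \<in> H" "q' \<in> H"
    and q: "q \<in> V" "conv V E {q, q'} = V" "sym_diff (\<phi> p) (\<phi> q) = {j}"
  shows "\<forall>z\<in>H. \<phi> p \<inter> \<phi> q' \<subseteq> \<phi> z \<and> \<phi> z \<subseteq> \<phi> p \<union> \<phi> q'"
proof (intro ballI conjI subsetI)
  fix z i assume "z \<in> H"
  then have z: "z \<in> V" "(j \<in> \<phi> z) = (j \<in> \<phi> p)" "(j \<in> \<phi> z) = (j \<in> \<phi> q')"
    using assms(2,3) H by auto
  have pq_agree: "(k \<in> \<phi> p) = (k \<in> \<phi> q)" if "k \<noteq> j" for k
    using that q(3) by blast
  have sep: "i \<in> sym_diff (\<phi> q) (\<phi> q')" if "i \<noteq> j" "(i \<in> \<phi> z) \<noteq> (i \<in> \<phi> p)"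
    using conv_pair_separates[OF q(1) _ q(2) z(1), of p i] assms(2,3) H that pq_agree by blast
  show "i \<in> \<phi> z" if "i \<in> \<phi> p \<inter> \<phi> q'"
    using that z pq_agree sep by (cases "i = j") auto
  show "i \<in> \<phi> p \<union> \<phi> q'" if "i \<in> \<phi> z"
    using that z pq_agree sep by (cases "i = j") auto
qed

lemma coordinate_halfspace_antipodal_pair:
  assumes antipodal: "\<forall>a\<in>V. \<exists>b\<in>V. conv V E {a, b} = V"
    and H: "H = {z \<in> V. (j \<in> \<phi> z) = c}"
    and varies: "x \<in> V" "y \<in> V" "(j \<in> \<phi> x) \<noteq> (j \<in> \<phi> y)"
    and ab: "a \<in> H" "b \<in> H"
  obtains p p' where "p \<in> H" "p' \<in> H" "\<forall>z\<in>H. \<phi> p \<inter> \<phi> p' \<subseteq> \<phi> z \<and> \<phi> z \<subseteq> \<phi> p \<union> \<phi> p'"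
    "sym_diff (\<phi> a) (\<phi> p) \<inter> sym_diff (\<phi> b) (\<phi> p') = {}"
proof -
  have in_V: "a \<in> V" "b \<in> V" using ab H by auto
  obtain b' where b': "b' \<in> V" "conv V E {b, b'} = V"
    using antipodal in_V by blast
  have "j \<in> sym_diff (\<phi> b) (\<phi> b')"
    using conv_pair_separates[OF in_V(2) b' varies] .
  then have "(j \<in> \<phi> a) \<noteq> (j \<in> \<phi> b')"
    using ab H by auto
  then obtain p q where pq: "p \<in> V" "q \<in> V" "E p q" "sym_diff (\<phi> p) (\<phi> q) = {j}"
    "(j \<in> \<phi> p) = (j \<in> \<phi> a)" and q_between: "\<phi> a \<inter> \<phi> b' \<subseteq> \<phi> q \<and> \<phi> q \<subseteq> \<phi> a \<union> \<phi> b'"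
    by (rule geodesic_crosses_coordinate[OF in_V(1) b'(1)])
  have "p \<in> H" "q \<notin> H" using pq ab H by auto
  have pq_agree: "(i \<in> \<phi> p) = (i \<in> \<phi> q)" if "i \<noteq> j" for i
    using that pq(4) by blast
  obtain q' where q': "q' \<in> V" "conv V E {q, q'} = V"
    using antipodal pq(2) by blast
  have "j \<in> sym_diff (\<phi> q) (\<phi> q')"
    using conv_pair_separates[OF pq(2) q' varies] .
  then have "q' \<in> H" using \<open>q \<notin> H\<close> q'(1) pq(2) H by blast
  show thesis
  proof (rule that[OF \<open>p \<in> H\<close> \<open>q' \<in> H\<close>])
    show "\<forall>z\<in>H. \<phi> p \<inter> \<phi> q' \<subseteq> \<phi> z \<and> \<phi> z \<subseteq> \<phi> p \<union> \<phi> q'"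
      by (rule coordinate_halfspace_between[OF H \<open>p \<in> H\<close> \<open>q' \<in> H\<close> pq(2) q'(2) pq(4)])
    show "sym_diff (\<phi> a) (\<phi> p) \<inter> sym_diff (\<phi> b) (\<phi> q') = {}"
    proof (rule ccontr)
      assume "sym_diff (\<phi> a) (\<phi> p) \<inter> sym_diff (\<phi> b) (\<phi> q') \<noteq> {}"
      then obtain i where i: "i \<in> sym_diff (\<phi> a) (\<phi> p)" "i \<in> sym_diff (\<phi> b) (\<phi> q')"
        by blast
      have "i \<noteq> j" using i(2) ab(2) \<open>q' \<in> H\<close> H by blast
      have "i \<in> sym_diff (\<phi> q) (\<phi> q')" "i \<in> sym_diff (\<phi> b) (\<phi> b')"
        using conv_pair_separates[OF pq(2) q'] conv_pair_separates[OF _ b'] i(2) in_V \<open>q' \<in> V\<close> by blast+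
      \<comment> \<open>at \<open>i\<close>, \<open>q\<close> agrees with \<open>p\<close> and \<open>b\<close>, hence differs from both \<open>a\<close> and \<open>b'\<close>,
        although it lies between them\<close>
      then show False
        using i \<open>i \<noteq> j\<close> pq_agree q_between by blast
    qed
  qed
qed

end

lemma separating_antipodes_if_affine:
  assumes "affine V E" and uv: "u \<in> V" "v \<in> V"
  shows "separating_antipodes V E u v"
proof -
  obtain W :: "nat set" and F x y f where antipodal: "antipodal W F"
    and xy: "x \<in> W" "y \<in> W" "F x y" and f: "bij_betw f V (halfspace W F x y)"
    and iso: "\<forall>a\<in>V. \<forall>b\<in>V. E a b \<longleftrightarrow> F (f a) (f b)"
    using assms(1) unfolding affine_def by blast
  obtain g where "cube_embedding W F g"
    using antipodal unfolding antipodal_def by (meson cube_embedding_if_partial_cube)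
  interpret W: cube_embedding W F g by fact
  obtain j where j: "sym_diff (g x) (g y) = {j}"
    by (rule W.edge_coordinate[OF xy])
  define H where "H = {z \<in> W. (j \<in> g z) = (j \<in> g x)}"
  have f: "bij_betw f V H"
    using f W.halfspace_eq_coordinate_halfspace[OF xy(1,2) j] by (simp add: H_def)
  interpret G: cube_embedding V E "g \<circ> f"
    using W.cube_embedding_pullback[OF W.convex_coordinate_halfspace f[unfolded H_def] iso] .
  have fH: "f z \<in> H" if "z \<in> V" for z
    using f that by (auto simp: bij_betw_def)
  obtain p p' where p: "p \<in> H" "p' \<in> H" "\<forall>z\<in>H. g p \<inter> g p' \<subseteq> g z \<and> g z \<subseteq> g p \<union> g p'"
    and disjoint: "sym_diff (g (f u)) (g p) \<inter> sym_diff (g (f v)) (g p') = {}"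
    using W.coordinate_halfspace_antipodal_pair[OF _ H_def xy(1,2) _ fH fH] antipodal j uv
    unfolding antipodal_def by blast
  define w w' where "w = inv_into V f p" and "w' = inv_into V f p'"
  have w: "w \<in> V" "w' \<in> V" "f w = p" "f w' = p'"
    using f p(1,2) by (auto simp: w_def w'_def bij_betw_def inv_into_into f_inv_into_f)
  have "conv V E {w, w'} = V"
    using G.conv_pair_eq_vertices_iff[OF w(1,2)] p(3) fH w(3,4) by auto
  moreover have "{C \<in> theta_classes V E. crosses V E C (conv V E {u, w})} \<inter>
      {C \<in> theta_classes V E. crosses V E C (conv V E {v, w'})} = {}"
    using G.theta_classes_crossing_disjoint_iff[OF uv w(1,2)] disjoint w(3,4) by simp
  ultimately show ?thesis
    unfolding separating_antipodes_def using w(1,2) by blast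
qed

section \<open>Gluing a partial cube to its mirror copy\<close>

text \<open>\<open>pos z\<close> and \<open>neg z\<close> encode \<open>z\<close> and \<open>-z\<close> in \<open>nat\<close> by parity.\<close>

locale antipodal_doubling = cube_embedding V E \<phi> for V E \<phi> +
  fixes U :: "nat set" and N :: nat and code :: "'a \<Rightarrow> nat"
  assumes finite_vertices: "finite V" and nonempty: "V \<noteq> {}"
    and coords_subset: "\<forall>z\<in>V. \<phi> z \<subseteq> U" and finite_U: "finite U" and fresh: "N \<notin> U"
    and code_inj: "inj_on code V"
    and antipodes: "\<forall>s\<in>V. \<forall>t\<in>V. \<exists>w\<in>V. \<exists>w'\<in>V. \<phi> w' = U - \<phi> w \<and>
      sym_diff (\<phi> s) (\<phi> w) \<inter> sym_diff (\<phi> t) (\<phi> w') = {}"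
begin

definition pos :: "'a \<Rightarrow> nat" where
  "pos z = 2 * code z"

definition neg :: "'a \<Rightarrow> nat" where
  "neg z = Suc (2 * code z)"

definition verts :: "nat set" where
  "verts = pos ` V \<union> neg ` V"

definition coords :: "nat \<Rightarrow> nat set" where
  "coords n = (let z = inv_into V code (n div 2) in if even n then \<phi> z else insert N (U - \<phi> z))"

definition adj :: "nat \<Rightarrow> nat \<Rightarrow> bool" where
  "adj a b \<longleftrightarrow> a \<in> verts \<and> b \<in> verts \<and> hamming_dist coords a b = 1"

lemma coords_pos: "z \<in> V \<Longrightarrow> coords (pos z) = \<phi> z"
  by (simp add: coords_def pos_def code_inj)

lemma coords_neg: "z \<in> V \<Longrightarrow> coords (neg z) = insert N (U - \<phi> z)"
  by (simp add: coords_def neg_def code_inj)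

lemma pos_in_verts: "z \<in> V \<Longrightarrow> pos z \<in> verts"
  and neg_in_verts: "z \<in> V \<Longrightarrow> neg z \<in> verts"
  by (simp_all add: verts_def)

lemma verts_cases:
  assumes "a \<in> verts"
  obtains (pos) s where "s \<in> V" "a = pos s" | (neg) s where "s \<in> V" "a = neg s"
  using assms unfolding verts_def by blast

lemma fresh_coord: "z \<in> V \<Longrightarrow> N \<notin> \<phi> z"
  using coords_subset fresh by blast

lemma coords_subset_verts: "a \<in> verts \<Longrightarrow> coords a \<subseteq> insert N U"
  by (cases rule: verts_cases) (use coords_subset in \<open>fastforce simp: coords_pos coords_neg\<close>)+

lemma inj_on_pos: "inj_on pos V"
  using code_inj by (simp add: inj_on_def pos_def)

lemma finite_coords_verts: "a \<in> verts \<Longrightarrow> finite (coords a)"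
  using finite_coords finite_U by (auto elim: verts_cases simp: coords_pos coords_neg)

lemma hamming_dist_pos_pos:
  "s \<in> V \<Longrightarrow> t \<in> V \<Longrightarrow> hamming_dist coords (pos s) (pos t) = hamming_dist \<phi> s t"
  by (simp add: hamming_dist_def coords_pos)

lemma hamming_dist_neg_neg:
  assumes "s \<in> V" "t \<in> V"
  shows "hamming_dist coords (neg s) (neg t) = hamming_dist \<phi> s t"
proof -
  have "sym_diff (insert N (U - \<phi> s)) (insert N (U - \<phi> t)) = sym_diff (\<phi> s) (\<phi> t)"
    using coords_subset fresh assms by blast
  then show ?thesis
    by (simp add: hamming_dist_def coords_neg assms)
qed

lemma hamming_dist_pos_neg:
  assumes "s \<in> V" "t \<in> V"
  shows "hamming_dist coords (pos s) (neg t) = Suc (card (sym_diff (\<phi> s) (U - \<phi> t)))"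
proof -
  have "sym_diff (\<phi> s) (insert N (U - \<phi> t)) = insert N (sym_diff (\<phi> s) (U - \<phi> t))"
    "N \<notin> sym_diff (\<phi> s) (U - \<phi> t)"
    using coords_subset fresh assms by blast+
  moreover have "finite (sym_diff (\<phi> s) (U - \<phi> t))"
    using finite_coords finite_U assms by blast
  ultimately show ?thesis
    by (simp add: hamming_dist_def coords_pos coords_neg assms)
qed

lemma geodesic_in_copy:
  assumes h: "\<forall>s\<in>V. h s \<in> verts" "\<forall>s\<in>V. \<forall>t\<in>V. hamming_dist coords (h s) (h t) = hamming_dist \<phi> s t"
    and "s \<in> V" "t \<in> V"
  shows "\<exists>xs. walk_betw verts adj (h s) (h t) xs \<and> length xs = Suc (hamming_dist coords (h s) (h t))"
proof -
  obtain xs where xs: "walk_betw V E s t xs" "length xs = Suc (hamming_dist \<phi> s t)"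
    using assms(3,4) by (rule geodesic_exists)
  have "set xs \<subseteq> V" using xs(1) by (simp add: walk_betw_def walk_def)
  then have "walk_betw verts adj (h s) (h t) (map h xs)"
    using xs(1) h by (intro walk_betw_map) (auto simp: adj_def adjacent_iff_hamming_dist_eq_1 subset_iff)
  then show ?thesis
    using xs(2) h assms(3,4) by (metis length_map)
qed

lemma geodesic_pos_pos:
  "s \<in> V \<Longrightarrow> t \<in> V \<Longrightarrow>
    \<exists>xs. walk_betw verts adj (pos s) (pos t) xs \<and> length xs = Suc (hamming_dist coords (pos s) (pos t))"
  by (rule geodesic_in_copy) (simp_all add: pos_in_verts hamming_dist_pos_pos)

lemma geodesic_neg_neg:
  "s \<in> V \<Longrightarrow> t \<in> V \<Longrightarrow>
    \<exists>xs. walk_betw verts adj (neg s) (neg t) xs \<and> length xs = Suc (hamming_dist coords (neg s) (neg t))"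
  by (rule geodesic_in_copy) (simp_all add: neg_in_verts hamming_dist_neg_neg)

lemma adj_pos_neg_if_complement:
  assumes "w \<in> V" "w' \<in> V" "\<phi> w' = U - \<phi> w"
  shows "adj (pos w) (neg w')"
proof -
  have "U - \<phi> w' = \<phi> w" using assms(3) coords_subset assms(1) by blast
  then show ?thesis
    using assms by (simp add: adj_def pos_in_verts neg_in_verts hamming_dist_pos_neg)
qed

lemma geodesic_pos_neg:
  assumes "s \<in> V" "t \<in> V"
  shows "\<exists>xs. walk_betw verts adj (pos s) (neg t) xs \<and> length xs = Suc (hamming_dist coords (pos s) (neg t))"
proof -
  obtain w w' where w: "w \<in> V" "w' \<in> V" "\<phi> w' = U - \<phi> w"
    and disjoint: "sym_diff (\<phi> s) (\<phi> w) \<inter> sym_diff (\<phi> t) (\<phi> w') = {}"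
    using antipodes assms by blast
  obtain xs where xs: "walk_betw verts adj (pos s) (pos w) xs"
    "length xs = Suc (hamming_dist \<phi> s w)"
    using geodesic_pos_pos[OF assms(1) w(1)] hamming_dist_pos_pos[OF assms(1) w(1)] by auto
  obtain ys where ys: "walk_betw verts adj (neg w') (neg t) ys"
    "length ys = Suc (hamming_dist \<phi> t w')"
    using geodesic_neg_neg[OF w(2) assms(2)] hamming_dist_neg_neg[OF w(2) assms(2)]
    by (auto simp: hamming_dist_commute[of \<phi>])
  have edge: "walk_betw verts adj (pos w) (neg w') [pos w, neg w']"
    using adj_pos_neg_if_complement[OF w] w by (simp add: walk_betw_def pos_in_verts neg_in_verts)
  have "sym_diff (\<phi> s) (U - \<phi> t) = sym_diff (\<phi> s) (\<phi> w) \<union> sym_diff (\<phi> t) (\<phi> w')"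
    using w(3) coords_subset assms w(1) disjoint by blast
  then have "card (sym_diff (\<phi> s) (U - \<phi> t)) = hamming_dist \<phi> s w + hamming_dist \<phi> t w'"
    unfolding hamming_dist_def using disjoint finite_coords finite_U assms w
    by (simp add: card_Un_disjoint)
  then have "hamming_dist coords (pos s) (neg t) = Suc (hamming_dist \<phi> s w + hamming_dist \<phi> t w')"
    by (simp add: hamming_dist_pos_neg assms)
  then show ?thesis
    using walk_betw_append[OF walk_betw_append(1)[OF xs(1) edge] ys(1)]
      walk_betw_append(2)[OF xs(1) edge] xs(2) ys(2)
    by (intro exI[of _ "(xs @ tl [pos w, neg w']) @ tl ys"]) simp
qed

lemma adj_sym: "adj a b \<Longrightarrow> adj b a"
  by (auto simp: adj_def hamming_dist_commute[of coords])

lemma geodesic_verts: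
  assumes "a \<in> verts" "b \<in> verts"
  shows "\<exists>xs. walk_betw verts adj a b xs \<and> length xs = Suc (hamming_dist coords a b)"
proof -
  have neg_pos: "\<exists>xs. walk_betw verts adj (neg s) (pos t) xs \<and> length xs = Suc (hamming_dist coords (neg s) (pos t))"
    if st: "s \<in> V" "t \<in> V" for s t
  proof -
    obtain xs where "walk_betw verts adj (pos t) (neg s) xs" "length xs = Suc (hamming_dist coords (pos t) (neg s))"
      using geodesic_pos_neg[OF st(2,1)] by blast
    then show ?thesis
      using walk_betw_rev[of verts adj "pos t" "neg s" xs] adj_sym
      by (metis length_rev hamming_dist_commute)
  qed
  show ?thesis
    using assms(1)
  proof (cases rule: verts_cases)
    case (pos s)
    from assms(2) show ?thesis
      by (cases rule: verts_cases) (use pos in \<open>auto intro: geodesic_pos_pos geodesic_pos_neg\<close>)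
  next
    case (neg s)
    from assms(2) show ?thesis
      by (cases rule: verts_cases) (use neg in \<open>auto intro: neg_pos geodesic_neg_neg\<close>)
  qed
qed

lemma cube_embedding_verts: "cube_embedding verts adj coords"
  by (rule cube_embedding_if_geodesics)
    (auto simp: adj_def finite_coords_verts geodesic_verts)

lemma antipodal_verts: "antipodal verts adj"
  unfolding antipodal_def
proof (intro conjI ballI)
  interpret D: cube_embedding verts adj coords
    by (rule cube_embedding_verts)
  show "partial_cube verts adj"
    using cube_embedding_verts finite_vertices nonempty
    by (intro partial_cube_if_cube_embedding) (auto simp: verts_def)
  have conv: "conv verts adj {pos s, neg s} = verts" if "s \<in> V" for s
  proof -
    have "coords (pos s) \<inter> coords (neg s) = {}" "coords (pos s) \<union> coords (neg s) = insert N U"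
      using that coords_subset fresh by (auto simp: coords_pos coords_neg)
    then show ?thesis
      using D.conv_pair_eq_vertices_iff[OF pos_in_verts[OF that] neg_in_verts[OF that]]
        coords_subset_verts by simp
  qed
  fix a assume "a \<in> verts"
  then show "\<exists>b\<in>verts. conv verts adj {a, b} = verts"
  proof (cases rule: verts_cases)
    case (pos s)
    then show ?thesis using conv neg_in_verts by blast
  next
    case (neg s)
    then show ?thesis using conv pos_in_verts by (metis insert_commute)
  qed
qed

lemma halfspace_pos_neg:
  assumes "w \<in> V" "w' \<in> V" "\<phi> w' = U - \<phi> w"
  shows "halfspace verts adj (pos w) (neg w') = pos ` V"
proof -
  interpret D: cube_embedding verts adj coords
    by (rule cube_embedding_verts)
  have "sym_diff (coords (pos w)) (coords (neg w')) = {N}"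
    using assms coords_subset fresh by (auto simp: coords_pos coords_neg)
  then have "halfspace verts adj (pos w) (neg w') = {z \<in> verts. (N \<in> coords z) = (N \<in> coords (pos w))}"
    using assms by (intro D.halfspace_eq_coordinate_halfspace) (simp_all add: pos_in_verts neg_in_verts)
  also have "\<dots> = pos ` V"
    using assms(1)
    by (auto elim!: verts_cases simp: coords_pos coords_neg pos_in_verts fresh_coord)
  finally show ?thesis .
qed

lemma affine: "affine V E"
proof -
  obtain w w' where w: "w \<in> V" "w' \<in> V" "\<phi> w' = U - \<phi> w"
    using antipodes nonempty by blast
  have "bij_betw pos V (halfspace verts adj (pos w) (neg w'))"
    using inj_on_pos halfspace_pos_neg[OF w] by (simp add: bij_betw_def)
  moreover have "\<forall>a\<in>V. \<forall>b\<in>V. E a b \<longleftrightarrow> adj (pos a) (pos b)"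
    by (simp add: adj_def pos_in_verts hamming_dist_pos_pos adjacent_iff_hamming_dist_eq_1)
  ultimately show ?thesis
    unfolding affine_def
    using antipodal_verts adj_pos_neg_if_complement[OF w] pos_in_verts neg_in_verts w(1,2) by blast
qed

end

lemma affine_if_separating_antipodes:
  assumes "partial_cube V E" and separating: "\<forall>u\<in>V. \<forall>v\<in>V. separating_antipodes V E u v"
  shows "affine V E"
proof -
  have finite: "finite V" and nonempty: "V \<noteq> {}"
    using assms(1) by (auto simp: partial_cube_def)
  obtain \<phi>\<^sub>0 where \<phi>\<^sub>0: "cube_embedding V E \<phi>\<^sub>0"
    using assms(1) by (rule cube_embedding_if_partial_cube)
  obtain v0 where v0: "v0 \<in> V" using nonempty by blast
  define \<phi> where "\<phi> z = sym_diff (\<phi>\<^sub>0 z) (\<phi>\<^sub>0 v0)" for z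
  interpret G: cube_embedding V E \<phi>
    unfolding \<phi>_def using \<phi>\<^sub>0 v0 by (intro cube_embedding_translate) (auto simp: cube_embedding_def)
  have "\<phi> v0 = {}" by (simp add: \<phi>_def)
  define U where "U = \<Union> (\<phi> ` V)"
  have "finite U" using finite G.finite_coords by (simp add: U_def)
  then obtain N where "N \<notin> U"
    using ex_new_if_finite[OF infinite_UNIV_nat] by blast
  obtain code :: "'a \<Rightarrow> nat" where "inj_on code V"
    using finite_imp_inj_to_nat_seg[OF finite] by blast
  have "\<forall>s\<in>V. \<forall>t\<in>V. \<exists>w\<in>V. \<exists>w'\<in>V. \<phi> w' = U - \<phi> w \<and>
      sym_diff (\<phi> s) (\<phi> w) \<inter> sym_diff (\<phi> t) (\<phi> w') = {}"
    unfolding U_def using G.separating_antipodes_complement[OF v0 \<open>\<phi> v0 = {}\<close>] separating by blast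
  then interpret antipodal_doubling V E \<phi> U N code
    using finite nonempty \<open>finite U\<close> \<open>N \<notin> U\<close> \<open>inj_on code V\<close>
    by (intro antipodal_doubling.intro G.cube_embedding_axioms antipodal_doubling_axioms.intro)
      (auto simp: U_def)
  show ?thesis by (rule affine)
qed

theorem mainTheorem13:
  fixes V :: "'a set" and E :: "'a \<Rightarrow> 'a \<Rightarrow> bool"
  assumes "partial_cube V E"
  shows "affine V E \<longleftrightarrow>
    (\<forall>u\<in>V. \<forall>v\<in>V. \<exists>w\<in>V. \<exists>w'\<in>V. conv V E {w, w'} = V \<and>
       {C \<in> theta_classes V E. crosses V E C (conv V E {u, w})} \<inter>
       {C \<in> theta_classes V E. crosses V E C (conv V E {v, w'})} = {})"
  unfolding separating_antipodes_def[symmetric]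
  using separating_antipodes_if_affine affine_if_separating_antipodes[OF assms] by metis

end
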